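(* Let $k\ge1$, let $A_k$ be the matrix defined below and $\mathbf{b}=(\mathbf{w}_1,\mathbf{w}_2,c)^{\mathsf T}\in\mathbb{Z}^{2k+1}$ with $\mathbf{w}_1,\mathbf{w}_2\in\mathbb{Z}^k$, $c\in\mathbb{Z}$, and write $G=G_{A_k,\mathbf{b},\mathcal{G}(A_k)}$. If $l(\mathbf{b})=u(\mathbf{b})$, then $$\delta(G)=|\mathrm{supp}(\mathbf{w}_1+\|\mathbf{w}_1^-\|_\infty\mathbf{1}_k)|+|\mathrm{supp}(\mathbf{w}_2+\|\mathbf{w}_2^-\|_\infty\mathbf{1}_k)|.$$ If $l(\mathbf{b})<u(\mathbf{b})$, then $$\delta(G)=\min_{j\in\{1,2\}}|\mathrm{supp}(\mathbf{w}_j+\|\mathbf{w}_j^-\|_\infty\mathbf{1}_k)|+k+2^k.$$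
   Context: $I_k$ is the $k\times k$ identity, $\mathbf{1}_k$ the all-ones vector in $\mathbb{Z}^k$. Define $$A_k=\begin{pmatrix} I_k & I_k & 0 & 0 & -\mathbf{1}_k & \mathbf{0}\\ 0&0&I_k&I_k&\mathbf{0}&-\mathbf{1}_k\\ 0&0&0&0&1&1\end{pmatrix}\in\mathbb{Z}^{(2k+1)\times(4k+2)}$$ (zero blocks of appropriate sizes; last two columns are single columns). Fiber: $\mathcal{F}_A(\mathbf{b})=\{\mathbf{u}\in\mathbb{Z}^n_{\ge0}:A\mathbf{u}=\mathbf{b}\}$. For $\mathcal{M}\subset\mathbb{Z}^n$, $G_{A,\mathbf{b},\mathcal{M}}$ is the graph on $\mathcal{F}_A(\mathbf{b})$ with distinct $\mathbf{u},\mathbf{v}$ adjacent iff $\mathbf{u}-\mathbf{v}\in\pm\mathcal{M}$. The Graver basis $\mathcal{G}(A)$ is the set of $\sqsubseteq$-minimal elements of $(\ker A\cap\mathbb{Z}^n)\setminus\{\mathbf{0}\}$, where $\mathbf{u}\sqsubseteq\mathbf{v}$ iff $u_iv_i\ge0$ and $|u_i|\le|v_i|$ for all $i$. $\delta$ denotes minimal vertex degree; $\mathrm{supp}(\mathbf{w})$ is the set of indices of nonzero entries of $\mathbf{w}$. For $\mathbf{w}\in\mathbb{Z}^k$, $\mathbf{w}^-$ has entries $\max(-w_i,0)$. $l(\mathbf{b}):=\|\mathbf{w}_1^-\|_\infty$, $u(\mathbf{b}):=c-\|\mathbf{w}_2^-\|_\infty$. *)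

theory Defs
  imports Main
begin

text \<open>Integer vectors in Z^n are represented as functions nat => int that vanish
  at indices >= n; integer m x n matrices as functions nat => nat => int
  (only entries with row < m and column < n are used).\<close>

definition int_vecs :: "nat \<Rightarrow> (nat \<Rightarrow> int) set" where
  "int_vecs n = {u. \<forall>j\<ge>n. u j = 0}"

definition mat_vec :: "nat \<Rightarrow> (nat \<Rightarrow> nat \<Rightarrow> int) \<Rightarrow> (nat \<Rightarrow> int) \<Rightarrow> nat \<Rightarrow> int" where
  "mat_vec n A u = (\<lambda>i. \<Sum>j<n. A i j * u j)"

definition fiber :: "nat \<Rightarrow> nat \<Rightarrow> (nat \<Rightarrow> nat \<Rightarrow> int) \<Rightarrow> (nat \<Rightarrow> int) \<Rightarrow> (nat \<Rightarrow> int) set" where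
  "fiber m n A b = {u \<in> int_vecs n. (\<forall>j<n. 0 \<le> u j) \<and> (\<forall>i<m. mat_vec n A u i = b i)}"

definition int_kernel :: "nat \<Rightarrow> nat \<Rightarrow> (nat \<Rightarrow> nat \<Rightarrow> int) \<Rightarrow> (nat \<Rightarrow> int) set" where
  "int_kernel m n A = {u \<in> int_vecs n. \<forall>i<m. mat_vec n A u i = 0}"

definition conformal_le :: "(nat \<Rightarrow> int) \<Rightarrow> (nat \<Rightarrow> int) \<Rightarrow> bool" where
  "conformal_le u v \<longleftrightarrow> (\<forall>i. 0 \<le> u i * v i \<and> \<bar>u i\<bar> \<le> \<bar>v i\<bar>)"

definition graver_basis :: "nat \<Rightarrow> nat \<Rightarrow> (nat \<Rightarrow> nat \<Rightarrow> int) \<Rightarrow> (nat \<Rightarrow> int) set" where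
  "graver_basis m n A =
     {u \<in> int_kernel m n A - {\<lambda>_. 0}. \<forall>v \<in> int_kernel m n A - {\<lambda>_. 0}. conformal_le v u \<longrightarrow> v = u}"

definition fiber_adj :: "(nat \<Rightarrow> int) set \<Rightarrow> (nat \<Rightarrow> int) \<Rightarrow> (nat \<Rightarrow> int) \<Rightarrow> bool" where
  "fiber_adj M u v \<longleftrightarrow> u \<noteq> v \<and> ((\<lambda>i. u i - v i) \<in> M \<or> (\<lambda>i. v i - u i) \<in> M)"

definition fiber_degree :: "nat \<Rightarrow> nat \<Rightarrow> (nat \<Rightarrow> nat \<Rightarrow> int) \<Rightarrow> (nat \<Rightarrow> int) \<Rightarrow> (nat \<Rightarrow> int) set
    \<Rightarrow> (nat \<Rightarrow> int) \<Rightarrow> nat" where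
  "fiber_degree m n A b M u = card {v \<in> fiber m n A b. fiber_adj M u v}"

definition min_degree :: "nat \<Rightarrow> nat \<Rightarrow> (nat \<Rightarrow> nat \<Rightarrow> int) \<Rightarrow> (nat \<Rightarrow> int) \<Rightarrow> (nat \<Rightarrow> int) set \<Rightarrow> nat" where
  "min_degree m n A b M = Min (fiber_degree m n A b M ` fiber m n A b)"

text \<open>The matrix A_k of size (2k+1) x (4k+2). Columns 0..k-1, k..2k-1, 2k..3k-1,
  3k..4k-1 are the four identity blocks, column 4k and column 4k+1 the two last columns.
  Rows 0..k-1, k..2k-1 and row 2k.\<close>
definition A_mat :: "nat \<Rightarrow> nat \<Rightarrow> nat \<Rightarrow> int" where
  "A_mat k i j =
     (if i < k then (if j = i \<or> j = k + i then 1 else if j = 4*k then -1 else 0)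
      else if i < 2*k then (if j = k + i \<or> j = 2*k + i then 1 else if j = 4*k + 1 then -1 else 0)
      else if i = 2*k then (if j = 4*k \<or> j = 4*k + 1 then 1 else 0)
      else 0)"

definition b_vec :: "nat \<Rightarrow> (nat \<Rightarrow> int) \<Rightarrow> (nat \<Rightarrow> int) \<Rightarrow> int \<Rightarrow> nat \<Rightarrow> int" where
  "b_vec k w1 w2 c i =
     (if i < k then w1 i else if i < 2*k then w2 (i - k) else if i = 2*k then c else 0)"

definition neg_inf_norm :: "nat \<Rightarrow> (nat \<Rightarrow> int) \<Rightarrow> int" where
  "neg_inf_norm k w = Max ((\<lambda>i. max (- w i) 0) ` {..<k})"

definition supp_card_shift :: "nat \<Rightarrow> (nat \<Rightarrow> int) \<Rightarrow> int \<Rightarrow> nat" where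
  "supp_card_shift k w a = card {i. i < k \<and> w i + a \<noteq> 0}"

definition l_b :: "nat \<Rightarrow> (nat \<Rightarrow> int) \<Rightarrow> int" where
  "l_b k w1 = neg_inf_norm k w1"

definition u_b :: "nat \<Rightarrow> (nat \<Rightarrow> int) \<Rightarrow> int \<Rightarrow> int" where
  "u_b k w2 c = c - neg_inf_norm k w2"

end

theory Submission
  imports Defs "HOL-Library.Function_Algebras"
begin

text \<open>Up to sign, the Graver moves of \<open>A_k\<close> are the \<open>2k\<close> swaps inside the two pairs of identity
  blocks, which keep the coordinate \<open>4k\<close> fixed, and \<open>4^k\<close> shifts, which change it by one.
  The fiber is thus sliced into levels \<open>p = u (4*k)\<close>, ranging over \<open>l(b) \<le> p \<le> u(b)\<close>. On level
  \<open>p\<close> every row \<open>i\<close> with \<open>w1 i + p \<noteq> 0\<close> (and likewise for \<open>w2\<close> and \<open>c - p\<close>) admits a swap in one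
  direction, and unless \<open>p\<close> is extremal at least \<open>2^k\<close> shifts up and \<open>2^k\<close> shifts down apply; the
  vertex whose second and fourth blocks vanish has no other neighbours. Hence \<open>\<delta>\<close> is the minimum
  over \<open>p\<close> of this level degree, which is attained at an end of the level range.\<close>

section \<open>Graver bases and fibers\<close>

lemma mat_vec_add: "mat_vec n A (u + v) = mat_vec n A u + mat_vec n A v"
  unfolding mat_vec_def fun_eq_iff plus_fun_apply by (simp add: distrib_left sum.distrib)

lemma mat_vec_uminus: "mat_vec n A (- u) = - mat_vec n A u"
  unfolding mat_vec_def fun_eq_iff uminus_apply by (simp add: sum_negf)

lemma int_vecs_eqI:
  assumes "u \<in> int_vecs n" "v \<in> int_vecs n" "\<And>j. j < n \<Longrightarrow> u j = v j"
  shows "u = v"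
proof
  fix j show "u j = v j"
    using assms by (cases "j < n") (auto simp: int_vecs_def)
qed

lemma finite_bounded_int_vecs: "finite {u \<in> int_vecs n. \<forall>j<n. 0 \<le> u j \<and> u j \<le> M}"
proof (rule finite_subset)
  show "{u \<in> int_vecs n. \<forall>j<n. 0 \<le> u j \<and> u j \<le> M}
      \<subseteq> {u. \<forall>j. (j \<in> {..<n} \<longrightarrow> u j \<in> {0..M}) \<and> (j \<notin> {..<n} \<longrightarrow> u j = 0)}"
    by (auto simp: int_vecs_def)
qed (rule finite_set_of_finite_funs; simp)

lemma int_kernel_uminus: "g \<in> int_kernel m n A \<Longrightarrow> - g \<in> int_kernel m n A"
  by (simp add: int_kernel_def int_vecs_def mat_vec_uminus)

lemma fiber_add_kernel_iff:
  assumes "u \<in> fiber m n A b" and "g \<in> int_kernel m n A"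
  shows "u + g \<in> fiber m n A b \<longleftrightarrow> (\<forall>j<n. 0 \<le> u j + g j)"
  using assms by (auto simp: fiber_def int_kernel_def int_vecs_def mat_vec_add)

lemma conformal_le_uminus: "conformal_le (- v) (- g) \<longleftrightarrow> conformal_le v g"
  by (simp add: conformal_le_def)

lemma conformal_le_int_vecs_iff:
  "u \<in> int_vecs n \<Longrightarrow> v \<in> int_vecs n \<Longrightarrow>
     conformal_le u v \<longleftrightarrow> (\<forall>j<n. 0 \<le> u j * v j \<and> \<bar>u j\<bar> \<le> \<bar>v j\<bar>)"
proof -
  assume "u \<in> int_vecs n" "v \<in> int_vecs n"
  then have "u j = 0" "v j = 0" if "\<not> j < n" for j
    using that by (auto simp: int_vecs_def)
  then show ?thesis
    unfolding conformal_le_def by (metis abs_zero mult_zero_left order_refl)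
qed

lemma graver_basis_iff:
  "g \<in> graver_basis m n A \<longleftrightarrow> g \<in> int_kernel m n A \<and> g \<noteq> 0 \<and>
     (\<forall>v \<in> int_kernel m n A. v \<noteq> 0 \<longrightarrow> conformal_le v g \<longrightarrow> v = g)"
  by (auto simp: graver_basis_def zero_fun_def)

lemma zero_notin_graver_basis: "0 \<notin> graver_basis m n A"
  by (simp add: graver_basis_iff)

lemma graver_basis_in_int_kernel: "g \<in> graver_basis m n A \<Longrightarrow> g \<in> int_kernel m n A"
  unfolding graver_basis_iff by blast

lemma graver_basis_minimal:
  "g \<in> graver_basis m n A \<Longrightarrow> h \<in> graver_basis m n A \<Longrightarrow> conformal_le h g \<Longrightarrow> h = g"
  unfolding graver_basis_iff by blast

lemma graver_basis_uminus:
  assumes "g \<in> graver_basis m n A"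
  shows "- g \<in> graver_basis m n A"
  unfolding graver_basis_iff
proof (intro conjI ballI impI)
  show "- g \<in> int_kernel m n A" "- g \<noteq> 0"
    using assms int_kernel_uminus[of g] unfolding graver_basis_iff by auto
  fix v assume v: "v \<in> int_kernel m n A" "v \<noteq> 0" "conformal_le v (- g)"
  have "- v \<in> int_kernel m n A" "- v \<noteq> 0" "conformal_le (- v) g"
    using v int_kernel_uminus[of v] conformal_le_uminus[of v "- g"] by auto
  then have "- v = g"
    using assms unfolding graver_basis_iff by blast
  then show "v = - g" by auto
qed

lemma fiber_adj_graver_basis:
  "fiber_adj (graver_basis m n A) u v \<longleftrightarrow> v - u \<in> graver_basis m n A"
proof -
  have "(\<lambda>i. u i - v i) = - (v - u)" "(\<lambda>i. v i - u i) = v - u"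
    by (simp_all add: fun_eq_iff)
  then show ?thesis
    unfolding fiber_adj_def
    using zero_notin_graver_basis graver_basis_uminus[of "- (v - u)" m n A] graver_basis_uminus[of "v - u" m n A]
    by auto
qed

lemma fiber_degree_graver_basis:
  "fiber_degree m n A b (graver_basis m n A) u
     = card {g \<in> graver_basis m n A. u + g \<in> fiber m n A b}"
proof -
  have "{v \<in> fiber m n A b. fiber_adj (graver_basis m n A) u v}
      = (\<lambda>g. u + g) ` {g \<in> graver_basis m n A. u + g \<in> fiber m n A b}"
  proof (intro set_eqI iffI)
    fix v assume "v \<in> {v \<in> fiber m n A b. fiber_adj (graver_basis m n A) u v}"
    then show "v \<in> (\<lambda>g. u + g) ` {g \<in> graver_basis m n A. u + g \<in> fiber m n A b}"
      by (intro image_eqI[where x = "v - u"]) (auto simp: fiber_adj_graver_basis)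
  qed (auto simp: fiber_adj_graver_basis)
  then show ?thesis
    unfolding fiber_degree_def by (simp add: card_image inj_on_def)
qed

text \<open>For a vector with entries in \<open>{-1, 0, 1}\<close> the conformally smaller vectors are exactly
  those that agree with it on part of its support.\<close>
lemma graver_basisI_unit_entries:
  assumes "g \<in> int_kernel m n A" "g \<noteq> 0" "\<And>j. \<bar>g j\<bar> \<le> 1"
    and minimal: "\<And>v. v \<in> int_kernel m n A \<Longrightarrow> (\<And>j. v j = 0 \<or> v j = g j) \<Longrightarrow> v = 0 \<or> v = g"
  shows "g \<in> graver_basis m n A"
  unfolding graver_basis_iff
proof (intro conjI ballI impI assms(1,2))
  fix v assume v: "v \<in> int_kernel m n A" "v \<noteq> 0" "conformal_le v g"
  have "v j = 0 \<or> v j = g j" for j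
  proof -
    have "0 \<le> v j * g j" "\<bar>v j\<bar> \<le> \<bar>g j\<bar>"
      using v(3) by (auto simp: conformal_le_def)
    moreover have "g j \<in> {-1, 0, 1}"
      using assms(3)[of j] by auto
    ultimately show ?thesis
      by (auto simp: zero_le_mult_iff)
  qed
  then show "v = g" using minimal v(1,2) by blast
qed

section \<open>The matrix \<open>A_k\<close>\<close>

lemma all_less_2k1_iff:
  fixes k :: nat
  shows "(\<forall>j<2*k+1. P j) \<longleftrightarrow> (\<forall>i<k. P i \<and> P (k+i)) \<and> P (2*k)"
proof (intro iffI allI impI)
  fix j assume H: "(\<forall>i<k. P i \<and> P (k+i)) \<and> P (2*k)" and "j < 2*k+1"
  then consider "j < k" | "k \<le> j" "j < 2*k" | "j = 2*k" by linarith
  then show "P j"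
  proof cases
    case 2
    then have "j - k < k" by simp
    then have "P (k + (j - k))" using H by blast
    then show ?thesis using 2 by simp
  qed (use H in auto)
qed auto

lemma all_less_4k2_iff:
  fixes k :: nat
  shows "(\<forall>j<4*k+2. P j) \<longleftrightarrow>
     (\<forall>i<k. P i \<and> P (k+i) \<and> P (2*k+i) \<and> P (3*k+i)) \<and> P (4*k) \<and> P (4*k+1)"
proof (intro iffI allI impI)
  fix j assume H: "(\<forall>i<k. P i \<and> P (k+i) \<and> P (2*k+i) \<and> P (3*k+i)) \<and> P (4*k) \<and> P (4*k+1)"
    and "j < 4*k+2"
  then consider "j < k" | "k \<le> j" "j < 2*k" | "2*k \<le> j" "j < 3*k" | "3*k \<le> j" "j < 4*k"
    | "j = 4*k" | "j = 4*k+1" by linarith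
  then show "P j"
  proof cases
    case 2
    then have "j - k < k" by simp
    then have "P (k + (j - k))" using H by blast
    then show ?thesis using 2 by simp
  next
    case 3
    then have "j - 2*k < k" by simp
    then have "P (2*k + (j - 2*k))" using H by blast
    then show ?thesis using 3 by simp
  next
    case 4
    then have "j - 3*k < k" by simp
    then have "P (3*k + (j - 3*k))" using H by blast
    then show ?thesis using 4 by simp
  qed (use H in auto)
qed auto

lemma mat_vec_A_mat_row_w1:
  assumes "i < k"
  shows "mat_vec (4*k+2) (A_mat k) u i = u i + u (k+i) - u (4*k)"
proof -
  have "A_mat k i j * u j = (if j = i then u i else 0) + (if j = k+i then u (k+i) else 0)
      - (if j = 4*k then u (4*k) else 0)" for j
    using assms by (auto simp: A_mat_def)
  then show ?thesis
    using assms by (simp add: mat_vec_def sum.distrib sum_subtractf)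
qed

lemma mat_vec_A_mat_row_w2:
  assumes "i < k"
  shows "mat_vec (4*k+2) (A_mat k) u (k+i) = u (2*k+i) + u (3*k+i) - u (4*k+1)"
proof -
  have "A_mat k (k+i) j * u j = (if j = 2*k+i then u (2*k+i) else 0)
      + (if j = 3*k+i then u (3*k+i) else 0) - (if j = 4*k+1 then u (4*k+1) else 0)" for j
    using assms by (auto simp: A_mat_def)
  then show ?thesis
    using assms by (simp add: mat_vec_def sum.distrib sum_subtractf)
qed

lemma mat_vec_A_mat_row_c: "mat_vec (4*k+2) (A_mat k) u (2*k) = u (4*k) + u (4*k+1)"
proof -
  have "A_mat k (2*k) j * u j
      = (if j = 4*k then u (4*k) else 0) + (if j = 4*k+1 then u (4*k+1) else 0)" for j
    by (auto simp: A_mat_def)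
  then show ?thesis
    by (simp add: mat_vec_def sum.distrib)
qed

lemma A_mat_rows_eq_iff:
  "(\<forall>i<2*k+1. mat_vec (4*k+2) (A_mat k) u i = b i) \<longleftrightarrow>
     (\<forall>i<k. u i + u (k+i) - u (4*k) = b i \<and> u (2*k+i) + u (3*k+i) - u (4*k+1) = b (k+i))
     \<and> u (4*k) + u (4*k+1) = b (2*k)"
  unfolding all_less_2k1_iff
  using mat_vec_A_mat_row_w1 mat_vec_A_mat_row_w2 mat_vec_A_mat_row_c by auto

lemma int_kernel_A_mat_iff:
  "g \<in> int_kernel (2*k+1) (4*k+2) (A_mat k) \<longleftrightarrow> g \<in> int_vecs (4*k+2) \<and>
     (\<forall>i<k. g i + g (k+i) = g (4*k) \<and> g (2*k+i) + g (3*k+i) = g (4*k+1)) \<and> g (4*k+1) = - g (4*k)"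
  unfolding int_kernel_def mem_Collect_eq A_mat_rows_eq_iff by auto

lemma fiber_A_mat_iff:
  "u \<in> fiber (2*k+1) (4*k+2) (A_mat k) (b_vec k w1 w2 c) \<longleftrightarrow> u \<in> int_vecs (4*k+2) \<and>
     (\<forall>i<k. 0 \<le> u i \<and> 0 \<le> u (k+i) \<and> 0 \<le> u (2*k+i) \<and> 0 \<le> u (3*k+i)
        \<and> u i + u (k+i) = w1 i + u (4*k) \<and> u (2*k+i) + u (3*k+i) = w2 i + u (4*k+1))
     \<and> 0 \<le> u (4*k) \<and> 0 \<le> u (4*k+1) \<and> u (4*k) + u (4*k+1) = c"
  unfolding fiber_def mem_Collect_eq A_mat_rows_eq_iff all_less_4k2_iff
  by (auto simp: b_vec_def algebra_simps)

definition blocks :: "nat \<Rightarrow> (nat \<Rightarrow> int) \<Rightarrow> (nat \<Rightarrow> int) \<Rightarrow> (nat \<Rightarrow> int) \<Rightarrow> (nat \<Rightarrow> int)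
    \<Rightarrow> int \<Rightarrow> int \<Rightarrow> nat \<Rightarrow> int" where
  "blocks k x y z v s t j =
     (if j < k then x j else if j < 2*k then y (j - k) else if j < 3*k then z (j - 2*k)
      else if j < 4*k then v (j - 3*k) else if j = 4*k then s else if j = 4*k+1 then t else 0)"

lemma blocks_apply [simp]:
  "i < k \<Longrightarrow> blocks k x y z v s t i = x i"
  "i < k \<Longrightarrow> blocks k x y z v s t (k+i) = y i"
  "i < k \<Longrightarrow> blocks k x y z v s t (2*k+i) = z i"
  "i < k \<Longrightarrow> blocks k x y z v s t (3*k+i) = v i"
  "blocks k x y z v s t (4*k) = s"
  "blocks k x y z v s t (Suc (4*k)) = t"
  by (simp_all add: blocks_def)

lemma blocks_in_int_vecs: "blocks k x y z v s t \<in> int_vecs (4*k+2)"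
  by (simp add: int_vecs_def blocks_def)

lemma all_blocks_iff:
  "(\<forall>j. P (blocks k x y z v s t j)) \<longleftrightarrow>
     P 0 \<and> (\<forall>i<k. P (x i) \<and> P (y i) \<and> P (z i) \<and> P (v i)) \<and> P s \<and> P t"
proof -
  have tail: "blocks k x y z v s t j = 0" if "4*k+2 \<le> j" for j
    using that by (simp add: blocks_def)
  have "(\<forall>j. P (blocks k x y z v s t j)) \<longleftrightarrow> P 0 \<and> (\<forall>j<4*k+2. P (blocks k x y z v s t j))"
  proof (intro iffI allI conjI impI)
    fix j assume H: "P 0 \<and> (\<forall>j<4*k+2. P (blocks k x y z v s t j))"
    show "P (blocks k x y z v s t j)"
      using H tail[of j] by (cases "j < 4*k+2") auto
  next
    assume "\<forall>j. P (blocks k x y z v s t j)"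
    then have "P (blocks k x y z v s t (4*k+2))" by blast
    then show "P 0"
      using tail[of "4*k+2"] by simp
  qed auto
  then show ?thesis
    unfolding all_less_4k2_iff by simp
qed

section \<open>The Graver basis of \<open>A_k\<close>\<close>

definition move_swap1 :: "nat \<Rightarrow> nat \<Rightarrow> nat \<Rightarrow> int" where
  "move_swap1 k i = blocks k (\<lambda>j. of_bool (j = i)) (\<lambda>j. - of_bool (j = i)) 0 0 0 0"

definition move_swap2 :: "nat \<Rightarrow> nat \<Rightarrow> nat \<Rightarrow> int" where
  "move_swap2 k i = blocks k 0 0 (\<lambda>j. of_bool (j = i)) (\<lambda>j. - of_bool (j = i)) 0 0"

definition move_shift :: "nat \<Rightarrow> nat set \<Rightarrow> nat set \<Rightarrow> nat \<Rightarrow> int" where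
  "move_shift k S T = blocks k (\<lambda>j. of_bool (j \<in> S)) (\<lambda>j. of_bool (j \<notin> S))
     (\<lambda>j. - of_bool (j \<in> T)) (\<lambda>j. - of_bool (j \<notin> T)) 1 (-1)"

lemma move_swap1_eq:
  "i < k \<Longrightarrow> move_swap1 k i = (\<lambda>j. if j = i then 1 else if j = k+i then -1 else 0)"
  by (auto simp: move_swap1_def blocks_def fun_eq_iff)

lemma move_swap2_eq:
  "i < k \<Longrightarrow> move_swap2 k i = (\<lambda>j. if j = 2*k+i then 1 else if j = 3*k+i then -1 else 0)"
  by (auto simp: move_swap2_def blocks_def fun_eq_iff)

lemma move_shift_eq_iff:
  assumes "S \<subseteq> {..<k}" "S' \<subseteq> {..<k}" "T \<subseteq> {..<k}" "T' \<subseteq> {..<k}"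
  shows "move_shift k S T = move_shift k S' T' \<longleftrightarrow> S = S' \<and> T = T'"
proof
  assume eq: "move_shift k S T = move_shift k S' T'"
  have "(i \<in> S \<longleftrightarrow> i \<in> S') \<and> (i \<in> T \<longleftrightarrow> i \<in> T')" if "i < k" for i
    using fun_cong[OF eq, of i] fun_cong[OF eq, of "2*k+i"] that
    by (auto simp: move_shift_def of_bool_def split: if_splits)
  then show "S = S' \<and> T = T'"
    using assms by blast
qed simp

lemma move_swap1_in_graver_basis:
  assumes i: "i < k"
  shows "move_swap1 k i \<in> graver_basis (2*k+1) (4*k+2) (A_mat k)"
proof (rule graver_basisI_unit_entries)
  show "move_swap1 k i \<in> int_kernel (2*k+1) (4*k+2) (A_mat k)"
    unfolding int_kernel_A_mat_iff move_swap1_def using blocks_in_int_vecs by simp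
  show "move_swap1 k i \<noteq> 0"
    using i by (auto simp: move_swap1_eq fun_eq_iff intro!: exI[of _ i])
  show "\<bar>move_swap1 k i j\<bar> \<le> 1" for j
    using i by (simp add: move_swap1_eq)
  fix v assume v: "v \<in> int_kernel (2*k+1) (4*k+2) (A_mat k)"
    and sub: "\<And>j. v j = 0 \<or> v j = move_swap1 k i j"
  have off: "v j = 0" if "j \<noteq> i" "j \<noteq> k+i" for j
    using sub[of j] that i by (simp add: move_swap1_eq)
  have "v i + v (k+i) = 0"
    using v[unfolded int_kernel_A_mat_iff] i off[of "4*k"] by simp
  moreover have "v i = 0 \<or> v i = 1" "v (k+i) = 0 \<or> v (k+i) = -1"
    using sub[of i] sub[of "k+i"] i by (simp_all add: move_swap1_eq)
  ultimately consider "v i = 0" "v (k+i) = 0" | "v i = 1" "v (k+i) = -1"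
    by linarith
  then show "v = 0 \<or> v = move_swap1 k i"
  proof cases
    case 1
    have "v j = 0" for j
      using off[of j] 1 by (cases "j = i"; cases "j = k+i") auto
    then show ?thesis by (simp add: fun_eq_iff)
  next
    case 2
    have "v j = move_swap1 k i j" for j
      using off[of j] 2 i by (cases "j = i"; cases "j = k+i") (auto simp: move_swap1_eq)
    then show ?thesis by (simp add: fun_eq_iff)
  qed
qed

lemma move_swap2_in_graver_basis:
  assumes i: "i < k"
  shows "move_swap2 k i \<in> graver_basis (2*k+1) (4*k+2) (A_mat k)"
proof (rule graver_basisI_unit_entries)
  show "move_swap2 k i \<in> int_kernel (2*k+1) (4*k+2) (A_mat k)"
    unfolding int_kernel_A_mat_iff move_swap2_def using blocks_in_int_vecs by simp
  show "move_swap2 k i \<noteq> 0"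
    using i by (auto simp: move_swap2_eq fun_eq_iff intro!: exI[of _ "2*k+i"])
  show "\<bar>move_swap2 k i j\<bar> \<le> 1" for j
    using i by (simp add: move_swap2_eq)
  fix v assume v: "v \<in> int_kernel (2*k+1) (4*k+2) (A_mat k)"
    and sub: "\<And>j. v j = 0 \<or> v j = move_swap2 k i j"
  have off: "v j = 0" if "j \<noteq> 2*k+i" "j \<noteq> 3*k+i" for j
    using sub[of j] that i by (simp add: move_swap2_eq)
  have "v (2*k+i) + v (3*k+i) = 0"
    using v[unfolded int_kernel_A_mat_iff] i off[of "4*k+1"] by simp
  moreover have "v (2*k+i) = 0 \<or> v (2*k+i) = 1" "v (3*k+i) = 0 \<or> v (3*k+i) = -1"
    using sub[of "2*k+i"] sub[of "3*k+i"] i by (simp_all add: move_swap2_eq)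
  ultimately consider "v (2*k+i) = 0" "v (3*k+i) = 0" | "v (2*k+i) = 1" "v (3*k+i) = -1"
    by linarith
  then show "v = 0 \<or> v = move_swap2 k i"
  proof cases
    case 1
    have "v j = 0" for j
      using off[of j] 1 by (cases "j = 2*k+i"; cases "j = 3*k+i") auto
    then show ?thesis by (simp add: fun_eq_iff)
  next
    case 2
    have "v j = move_swap2 k i j" for j
      using off[of j] 2 i by (cases "j = 2*k+i"; cases "j = 3*k+i") (auto simp: move_swap2_eq)
    then show ?thesis by (simp add: fun_eq_iff)
  qed
qed

lemma int_kernel_A_mat_below_move_shift:
  assumes v: "v \<in> int_kernel (2*k+1) (4*k+2) (A_mat k)"
    and sub: "\<And>j. v j = 0 \<or> v j = move_shift k S T j"
  shows "v = 0 \<or> v = move_shift k S T"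
proof -
  let ?g = "move_shift k S T"
  have vk: "v \<in> int_vecs (4*k+2)" "v (Suc (4*k)) = - v (4*k)"
    using v[unfolded int_kernel_A_mat_iff] by simp_all
  have entries: "(v i = 0 \<or> v i = of_bool (i \<in> S)) \<and> (v (k+i) = 0 \<or> v (k+i) = of_bool (i \<notin> S))
      \<and> (v (2*k+i) = 0 \<or> v (2*k+i) = - of_bool (i \<in> T))
      \<and> (v (3*k+i) = 0 \<or> v (3*k+i) = - of_bool (i \<notin> T))
      \<and> v i + v (k+i) = v (4*k) \<and> v (2*k+i) + v (3*k+i) = - v (4*k)" if "i < k" for i
    using sub[of i] sub[of "k+i"] sub[of "2*k+i"] sub[of "3*k+i"] v[unfolded int_kernel_A_mat_iff] that
    by (simp add: move_shift_def)
  have "v (4*k) = 0 \<or> v (4*k) = 1"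
    using sub[of "4*k"] by (simp add: move_shift_def)
  then show ?thesis
  proof
    assume v0: "v (4*k) = 0"
    have "v i = 0 \<and> v (k+i) = 0 \<and> v (2*k+i) = 0 \<and> v (3*k+i) = 0" if "i < k" for i
      using entries[OF that] v0 by (cases "i \<in> S"; cases "i \<in> T") auto
    then have "\<forall>j<4*k+2. v j = 0"
      unfolding all_less_4k2_iff using v0 vk by simp
    then have "v = 0"
      by (intro int_vecs_eqI[OF vk(1)]) (simp_all add: int_vecs_def)
    then show ?thesis ..
  next
    assume v1: "v (4*k) = 1"
    have "v i = ?g i \<and> v (k+i) = ?g (k+i) \<and> v (2*k+i) = ?g (2*k+i) \<and> v (3*k+i) = ?g (3*k+i)"
      if "i < k" for i
      using entries[OF that] v1 that by (cases "i \<in> S"; cases "i \<in> T") (auto simp: move_shift_def)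
    then have "\<forall>j<4*k+2. v j = ?g j"
      unfolding all_less_4k2_iff using v1 vk by (simp add: move_shift_def)
    then have "v = ?g"
      using int_vecs_eqI[OF vk(1) blocks_in_int_vecs] unfolding move_shift_def by simp
    then show ?thesis ..
  qed
qed

lemma move_shift_in_graver_basis:
  "move_shift k S T \<in> graver_basis (2*k+1) (4*k+2) (A_mat k)"
proof (rule graver_basisI_unit_entries)
  show "move_shift k S T \<in> int_kernel (2*k+1) (4*k+2) (A_mat k)"
    unfolding int_kernel_A_mat_iff move_shift_def using blocks_in_int_vecs by simp
  show "move_shift k S T \<noteq> 0"
    by (auto simp: move_shift_def fun_eq_iff intro!: exI[of _ "4*k"])
  have "\<forall>j. \<bar>move_shift k S T j\<bar> \<le> 1"
    unfolding move_shift_def all_blocks_iff[where P = "\<lambda>a. \<bar>a\<bar> \<le> 1"] by simp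
  then show "\<bar>move_shift k S T j\<bar> \<le> 1" for j
    by blast
qed (rule int_kernel_A_mat_below_move_shift)

lemma graver_basis_A_mat_pos_level:
  assumes g: "g \<in> graver_basis (2*k+1) (4*k+2) (A_mat k)" and pos: "0 < g (4*k)"
  shows "g = move_shift k {i. i < k \<and> 0 < g i} {i. i < k \<and> g (2*k+i) < 0}"
proof -
  let ?h = "move_shift k {i. i < k \<and> 0 < g i} {i. i < k \<and> g (2*k+i) < 0}"
  have gk: "g \<in> int_vecs (4*k+2)" "\<forall>i<k. g i + g (k+i) = g (4*k) \<and> g (2*k+i) + g (3*k+i) = g (4*k+1)"
    "g (4*k+1) = - g (4*k)"
    using graver_basis_in_int_kernel[OF g, unfolded int_kernel_A_mat_iff] by auto
  have "\<forall>j<4*k+2. 0 \<le> ?h j * g j \<and> \<bar>?h j\<bar> \<le> \<bar>g j\<bar>"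
    unfolding all_less_4k2_iff using gk(2,3) pos by (auto simp: move_shift_def)
  then have "conformal_le ?h g"
    using conformal_le_int_vecs_iff[OF blocks_in_int_vecs gk(1)] unfolding move_shift_def by simp
  then have "?h = g"
    by (rule graver_basis_minimal[OF g move_shift_in_graver_basis])
  then show ?thesis by simp
qed

lemma graver_basis_A_mat_swap1:
  assumes g: "g \<in> graver_basis (2*k+1) (4*k+2) (A_mat k)" and "g (4*k) = 0" "i < k" "0 < g i"
  shows "g = move_swap1 k i"
proof -
  have "g (k+i) = - g i"
    using assms graver_basis_in_int_kernel[OF g, unfolded int_kernel_A_mat_iff] by auto
  then have "conformal_le (move_swap1 k i) g"
    using assms by (auto simp: conformal_le_def move_swap1_eq)
  then have "move_swap1 k i = g"
    by (rule graver_basis_minimal[OF g move_swap1_in_graver_basis[OF \<open>i < k\<close>]])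
  then show ?thesis by simp
qed

lemma graver_basis_A_mat_swap2:
  assumes g: "g \<in> graver_basis (2*k+1) (4*k+2) (A_mat k)" and "g (4*k) = 0" "i < k" "0 < g (2*k+i)"
  shows "g = move_swap2 k i"
proof -
  have "g (3*k+i) = - g (2*k+i)"
    using assms graver_basis_in_int_kernel[OF g, unfolded int_kernel_A_mat_iff] by auto
  then have "conformal_le (move_swap2 k i) g"
    using assms by (auto simp: conformal_le_def move_swap2_eq)
  then have "move_swap2 k i = g"
    by (rule graver_basis_minimal[OF g move_swap2_in_graver_basis[OF \<open>i < k\<close>]])
  then show ?thesis by simp
qed

lemma graver_basis_A_mat_zero_level:
  assumes g: "g \<in> graver_basis (2*k+1) (4*k+2) (A_mat k)" and level: "g (4*k) = 0"
  obtains i where "i < k"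
    "g = move_swap1 k i \<or> g = - move_swap1 k i \<or> g = move_swap2 k i \<or> g = - move_swap2 k i"
proof -
  have gk: "g \<in> int_vecs (4*k+2)" "\<forall>i<k. g (k+i) = - g i \<and> g (3*k+i) = - g (2*k+i)"
    "g (4*k+1) = 0"
    using graver_basis_in_int_kernel[OF g, unfolded int_kernel_A_mat_iff] level
    by (auto simp: algebra_simps)
  have "\<exists>i<k. g i \<noteq> 0 \<or> g (2*k+i) \<noteq> 0"
  proof (rule ccontr)
    assume "\<not> ?thesis"
    then have "\<forall>j<4*k+2. g j = 0"
      unfolding all_less_4k2_iff using gk(2,3) level by simp
    then have "g = 0"
      using int_vecs_eqI[OF gk(1), of 0] by (simp add: int_vecs_def)
    with g show False
      using zero_notin_graver_basis by blast
  qed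
  then obtain i where i: "i < k" "g i \<noteq> 0 \<or> g (2*k+i) \<noteq> 0"
    by blast
  have ng: "- g \<in> graver_basis (2*k+1) (4*k+2) (A_mat k)" "(- g) (4*k) = 0"
    using graver_basis_uminus[OF g] level by auto
  have neg: "g = - h" if "- g = h" for h :: "nat \<Rightarrow> int"
    using that by auto
  from i(2) consider "0 < g i" | "0 < (- g) i" | "0 < g (2*k+i)" | "0 < (- g) (2*k+i)"
    by fastforce
  then show thesis
  proof cases
    case 1 then show ?thesis using that[OF i(1)] graver_basis_A_mat_swap1[OF g level i(1)] by blast
  next
    case 2 then show ?thesis using that[OF i(1)] neg[OF graver_basis_A_mat_swap1[OF ng i(1)]] by blast
  next
    case 3 then show ?thesis using that[OF i(1)] graver_basis_A_mat_swap2[OF g level i(1)] by blast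
  next
    case 4 then show ?thesis using that[OF i(1)] neg[OF graver_basis_A_mat_swap2[OF ng i(1)]] by blast
  qed
qed

lemma graver_basis_A_mat_level_cases:
  assumes g: "g \<in> graver_basis (2*k+1) (4*k+2) (A_mat k)"
  shows "g (4*k) = 0 \<or> g (4*k) = 1 \<or> g (4*k) = -1"
proof -
  have shift_level: "h (4*k) = 1" if "h \<in> graver_basis (2*k+1) (4*k+2) (A_mat k)" "0 < h (4*k)" for h
  proof -
    have "h (4*k) = move_shift k {i. i < k \<and> 0 < h i} {i. i < k \<and> h (2*k+i) < 0} (4*k)"
      using graver_basis_A_mat_pos_level[OF that] by (rule arg_cong)
    then show ?thesis by (simp add: move_shift_def)
  qed
  show ?thesis
    using shift_level[OF g] shift_level[OF graver_basis_uminus[OF g]] by fastforce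
qed

section \<open>Vertex degrees in the fibers of \<open>A_k\<close>\<close>

lemma neg_inf_norm_le_iff:
  assumes "0 < k"
  shows "neg_inf_norm k w \<le> a \<longleftrightarrow> 0 \<le> a \<and> (\<forall>i<k. - w i \<le> a)"
proof -
  have "(\<lambda>i. max (- w i) 0) ` {..<k} \<noteq> {}"
    using assms by auto
  then show ?thesis
    unfolding neg_inf_norm_def using assms by (subst Max_le_iff) auto
qed

lemma neg_inf_norm_nonneg: "0 < k \<Longrightarrow> 0 \<le> neg_inf_norm k w"
  using neg_inf_norm_le_iff by blast

lemma neg_inf_norm_shift_nonneg: "0 < k \<Longrightarrow> i < k \<Longrightarrow> 0 \<le> w i + neg_inf_norm k w"
  using neg_inf_norm_le_iff[of k w "neg_inf_norm k w"] by auto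

lemma supp_card_shift_le: "supp_card_shift k w a \<le> k"
  unfolding supp_card_shift_def by (rule order_trans[OF card_mono[of "{..<k}"]]) auto

lemma supp_card_shift_full:
  assumes "0 < k" "neg_inf_norm k w < a"
  shows "supp_card_shift k w a = k"
proof -
  have "{i. i < k \<and> w i + a \<noteq> 0} = {..<k}"
    using neg_inf_norm_shift_nonneg[OF assms(1), of _ w] assms(2) by force
  then show ?thesis
    unfolding supp_card_shift_def by simp
qed

locale A_mat_fiber =
  fixes k :: nat and w1 w2 :: "nat \<Rightarrow> int" and c :: int
  assumes k_pos: "0 < k"
begin

abbreviation "graver \<equiv> graver_basis (2*k+1) (4*k+2) (A_mat k)"
abbreviation "vertices \<equiv> fiber (2*k+1) (4*k+2) (A_mat k) (b_vec k w1 w2 c)"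

lemma vertex_level_bounds:
  assumes "u \<in> vertices"
  shows "l_b k w1 \<le> u (4*k)" "u (4*k) \<le> u_b k w2 c"
proof -
  have u: "\<forall>i<k. 0 \<le> u i \<and> 0 \<le> u (k+i) \<and> 0 \<le> u (2*k+i) \<and> 0 \<le> u (3*k+i)
        \<and> u i + u (k+i) = w1 i + u (4*k) \<and> u (2*k+i) + u (3*k+i) = w2 i + u (4*k+1)"
    "0 \<le> u (4*k)" "0 \<le> u (4*k+1)" "u (4*k) + u (4*k+1) = c"
    using assms[unfolded fiber_A_mat_iff] by auto
  have "neg_inf_norm k w1 \<le> u (4*k)" "neg_inf_norm k w2 \<le> u (4*k+1)"
    unfolding neg_inf_norm_le_iff[OF k_pos] using u by force+
  then show "l_b k w1 \<le> u (4*k)" "u (4*k) \<le> u_b k w2 c"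
    using u(4) by (simp_all add: l_b_def u_b_def)
qed

lemma finite_vertices: "finite vertices"
proof (rule finite_subset)
  let ?M = "\<bar>c\<bar> + (\<Sum>i<k. \<bar>w1 i\<bar> + \<bar>w2 i\<bar>)"
  show "vertices \<subseteq> {u \<in> int_vecs (4*k+2). \<forall>j<4*k+2. 0 \<le> u j \<and> u j \<le> ?M}"
  proof
    fix u assume "u \<in> vertices"
    note u = this[unfolded fiber_A_mat_iff]
    have "\<bar>w1 i\<bar> + \<bar>w2 i\<bar> \<le> (\<Sum>i<k. \<bar>w1 i\<bar> + \<bar>w2 i\<bar>)" if "i < k" for i
      using that by (intro member_le_sum) auto
    then have "u i \<le> ?M \<and> u (k+i) \<le> ?M \<and> u (2*k+i) \<le> ?M \<and> u (3*k+i) \<le> ?M" if "i < k" for i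
      using u that by fastforce
    moreover have "0 \<le> (\<Sum>i<k. \<bar>w1 i\<bar> + \<bar>w2 i\<bar>)"
      by (intro sum_nonneg) auto
    ultimately show "u \<in> {u \<in> int_vecs (4*k+2). \<forall>j<4*k+2. 0 \<le> u j \<and> u j \<le> ?M}"
      unfolding mem_Collect_eq all_less_4k2_iff using u by auto
  qed
qed (rule finite_bounded_int_vecs)

definition corner_vertex :: "int \<Rightarrow> nat \<Rightarrow> int" where
  "corner_vertex p = blocks k (\<lambda>i. w1 i + p) 0 (\<lambda>i. w2 i + (c - p)) 0 p (c - p)"

lemma corner_vertex_in_vertices:
  assumes "l_b k w1 \<le> p" "p \<le> u_b k w2 c"
  shows "corner_vertex p \<in> vertices"
proof -
  have "0 \<le> w1 i + p" "0 \<le> w2 i + (c - p)" if "i < k" for i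
    using neg_inf_norm_shift_nonneg[OF k_pos that, of w1] neg_inf_norm_shift_nonneg[OF k_pos that, of w2]
      assms by (auto simp: l_b_def u_b_def)
  moreover have "0 \<le> p" "0 \<le> c - p"
    using assms neg_inf_norm_nonneg[OF k_pos, of w1] neg_inf_norm_nonneg[OF k_pos, of w2]
    by (auto simp: l_b_def u_b_def)
  ultimately show ?thesis
    unfolding fiber_A_mat_iff corner_vertex_def using blocks_in_int_vecs by simp
qed

lemma add_graver_move_in_vertices_iff:
  assumes "u \<in> vertices" "g \<in> graver"
  shows "u + g \<in> vertices \<longleftrightarrow> (\<forall>j<4*k+2. 0 \<le> u j + g j)"
  using fiber_add_kernel_iff[OF assms(1) graver_basis_in_int_kernel[OF assms(2)]] .

lemma add_move_swap1_in_vertices_iff: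
  assumes "u \<in> vertices" "i < k"
  shows "u + move_swap1 k i \<in> vertices \<longleftrightarrow> 0 < u (k+i)"
  using assms(1)[unfolded fiber_A_mat_iff] assms(2)
  unfolding add_graver_move_in_vertices_iff[OF assms(1) move_swap1_in_graver_basis[OF assms(2)]]
    all_less_4k2_iff
  by (auto simp: move_swap1_def)

lemma add_neg_move_swap1_in_vertices_iff:
  assumes "u \<in> vertices" "i < k"
  shows "u + - move_swap1 k i \<in> vertices \<longleftrightarrow> 0 < u i"
  using assms(1)[unfolded fiber_A_mat_iff] assms(2)
  unfolding add_graver_move_in_vertices_iff[OF assms(1)
      graver_basis_uminus[OF move_swap1_in_graver_basis[OF assms(2)]]] all_less_4k2_iff
  by (auto simp: move_swap1_def)

lemma add_move_swap2_in_vertices_iff: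
  assumes "u \<in> vertices" "i < k"
  shows "u + move_swap2 k i \<in> vertices \<longleftrightarrow> 0 < u (3*k+i)"
  using assms(1)[unfolded fiber_A_mat_iff] assms(2)
  unfolding add_graver_move_in_vertices_iff[OF assms(1) move_swap2_in_graver_basis[OF assms(2)]]
    all_less_4k2_iff
  by (auto simp: move_swap2_def)

lemma add_neg_move_swap2_in_vertices_iff:
  assumes "u \<in> vertices" "i < k"
  shows "u + - move_swap2 k i \<in> vertices \<longleftrightarrow> 0 < u (2*k+i)"
  using assms(1)[unfolded fiber_A_mat_iff] assms(2)
  unfolding add_graver_move_in_vertices_iff[OF assms(1)
      graver_basis_uminus[OF move_swap2_in_graver_basis[OF assms(2)]]] all_less_4k2_iff
  by (auto simp: move_swap2_def)

lemma add_move_shift_in_vertices_iff: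
  assumes "u \<in> vertices"
  shows "u + move_shift k S T \<in> vertices \<longleftrightarrow>
    (\<forall>i<k. if i \<in> T then 0 < u (2*k+i) else 0 < u (3*k+i)) \<and> 0 < u (4*k+1)"
  using assms[unfolded fiber_A_mat_iff]
  unfolding add_graver_move_in_vertices_iff[OF assms move_shift_in_graver_basis] all_less_4k2_iff
  by (auto simp: move_shift_def)

lemma add_neg_move_shift_in_vertices_iff:
  assumes "u \<in> vertices"
  shows "u + - move_shift k S T \<in> vertices \<longleftrightarrow>
    (\<forall>i<k. if i \<in> S then 0 < u i else 0 < u (k+i)) \<and> 0 < u (4*k)"
  using assms[unfolded fiber_A_mat_iff]
  unfolding add_graver_move_in_vertices_iff[OF assms graver_basis_uminus[OF move_shift_in_graver_basis]]
    all_less_4k2_iff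
  by (auto simp: move_shift_def)

definition level_moves :: "(nat \<Rightarrow> int) \<Rightarrow> int \<Rightarrow> (nat \<Rightarrow> int) set" where
  "level_moves u h = {g \<in> graver. u + g \<in> vertices \<and> g (4*k) = h}"

lemma level_moves_iff: "g \<in> level_moves u h \<longleftrightarrow> g \<in> graver \<and> u + g \<in> vertices \<and> g (4*k) = h"
  by (simp add: level_moves_def)

lemma finite_level_moves: "finite (level_moves u h)"
proof (rule finite_subset)
  show "level_moves u h \<subseteq> (\<lambda>v. v - u) ` vertices"
    unfolding level_moves_def by (auto intro: image_eqI[where x = "u + _"])
qed (intro finite_imageI finite_vertices)

lemma fiber_degree_eq_card_level_moves:
  "fiber_degree (2*k+1) (4*k+2) (A_mat k) (b_vec k w1 w2 c) graver u
     = card (level_moves u 0) + card (level_moves u 1) + card (level_moves u (-1))"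
proof -
  have "{g \<in> graver. u + g \<in> vertices} = level_moves u 0 \<union> level_moves u 1 \<union> level_moves u (-1)"
    unfolding level_moves_def using graver_basis_A_mat_level_cases by auto
  moreover have "level_moves u 0 \<inter> level_moves u 1 = {}"
    "(level_moves u 0 \<union> level_moves u 1) \<inter> level_moves u (-1) = {}"
    unfolding level_moves_def by auto
  ultimately show ?thesis
    unfolding fiber_degree_graver_basis by (simp add: finite_level_moves card_Un_disjoint)
qed

lemma move_swap1_choice_in_level_moves:
  assumes u: "u \<in> vertices" and i: "i < k" "w1 i + u (4*k) \<noteq> 0"
  shows "(if 0 < u i then - move_swap1 k i else move_swap1 k i) \<in> level_moves u 0"
proof -
  have "0 \<le> u i" "u i + u (k+i) = w1 i + u (4*k)" "0 \<le> u (k+i)"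
    using u[unfolded fiber_A_mat_iff] i(1) by auto
  then show ?thesis
    unfolding level_moves_def
    using i move_swap1_in_graver_basis[OF i(1)] graver_basis_uminus[OF move_swap1_in_graver_basis[OF i(1)]]
      add_move_swap1_in_vertices_iff[OF u i(1)] add_neg_move_swap1_in_vertices_iff[OF u i(1)]
    by (auto simp: move_swap1_def)
qed

lemma move_swap2_choice_in_level_moves:
  assumes u: "u \<in> vertices" and i: "i < k" "w2 i + (c - u (4*k)) \<noteq> 0"
  shows "(if 0 < u (2*k+i) then - move_swap2 k i else move_swap2 k i) \<in> level_moves u 0"
proof -
  have "0 \<le> u (2*k+i)" "u (2*k+i) + u (3*k+i) = w2 i + (c - u (4*k))" "0 \<le> u (3*k+i)"
    using u[unfolded fiber_A_mat_iff] i(1) by auto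
  then show ?thesis
    unfolding level_moves_def
    using i move_swap2_in_graver_basis[OF i(1)] graver_basis_uminus[OF move_swap2_in_graver_basis[OF i(1)]]
      add_move_swap2_in_vertices_iff[OF u i(1)] add_neg_move_swap2_in_vertices_iff[OF u i(1)]
    by (auto simp: move_swap2_def)
qed

lemma card_level_moves_zero_ge:
  assumes u: "u \<in> vertices"
  shows "supp_card_shift k w1 (u (4*k)) + supp_card_shift k w2 (c - u (4*k)) \<le> card (level_moves u 0)"
proof -
  define swap1 where "swap1 i = (if 0 < u i then - move_swap1 k i else move_swap1 k i)" for i
  define swap2 where "swap2 i = (if 0 < u (2*k+i) then - move_swap2 k i else move_swap2 k i)" for i
  let ?I1 = "{i. i < k \<and> w1 i + u (4*k) \<noteq> 0}" and ?I2 = "{i. i < k \<and> w2 i + (c - u (4*k)) \<noteq> 0}"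
  have x1: "{j. j < k \<and> swap1 i j \<noteq> 0} = {i}" and x2: "{j. j < k \<and> swap2 i j \<noteq> 0} = {}"
    and z2: "{j. j < k \<and> swap2 i (2*k+j) \<noteq> 0} = {i}" if "i < k" for i
    using that by (auto simp: swap1_def swap2_def move_swap1_eq move_swap2_eq)
  have "inj_on swap1 ?I1"
    by (rule inj_on_inverseI[where g = "\<lambda>g. the_elem {j. j < k \<and> g j \<noteq> 0}"]) (simp add: x1)
  moreover have "inj_on swap2 ?I2"
    by (rule inj_on_inverseI[where g = "\<lambda>g. the_elem {j. j < k \<and> g (2*k+j) \<noteq> 0}"]) (simp add: z2)
  moreover have "swap1 i \<noteq> swap2 i'" if "i < k" "i' < k" for i i'
  proof
    assume "swap1 i = swap2 i'"
    then have "{j. j < k \<and> swap1 i j \<noteq> 0} = {j. j < k \<and> swap2 i' j \<noteq> 0}"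
      by simp
    then show False
      using x1[OF that(1)] x2[OF that(2)] by simp
  qed
  then have "swap1 ` ?I1 \<inter> swap2 ` ?I2 = {}"
    by auto
  ultimately have "card (swap1 ` ?I1 \<union> swap2 ` ?I2) = card ?I1 + card ?I2"
    by (simp add: card_Un_disjoint card_image)
  moreover have "swap1 ` ?I1 \<union> swap2 ` ?I2 \<subseteq> level_moves u 0"
    using move_swap1_choice_in_level_moves[OF u] move_swap2_choice_in_level_moves[OF u]
    unfolding swap1_def swap2_def by blast
  then have "card (swap1 ` ?I1 \<union> swap2 ` ?I2) \<le> card (level_moves u 0)"
    by (rule card_mono[OF finite_level_moves])
  ultimately show ?thesis
    unfolding supp_card_shift_def by simp
qed

lemma card_level_moves_up_ge:
  assumes u: "u \<in> vertices" and below: "u (4*k) < u_b k w2 c"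
  shows "2^k \<le> card (level_moves u 1)"
proof -
  let ?T = "{i. i < k \<and> 0 < u (2*k+i)}"
  have uf: "\<forall>i<k. 0 \<le> u (2*k+i) \<and> u (2*k+i) + u (3*k+i) = w2 i + u (4*k+1)"
    "u (4*k+1) = c - u (4*k)"
    using u[unfolded fiber_A_mat_iff] by auto
  have "move_shift k S ?T \<in> level_moves u 1" for S
  proof -
    have T_ok: "0 < u (3*k+i)" if "i < k" "i \<notin> ?T" for i
      using uf below neg_inf_norm_shift_nonneg[OF k_pos \<open>i < k\<close>, of w2] that
      by (force simp: u_b_def)
    have t_pos: "0 < u (4*k+1)"
      using uf(2) below neg_inf_norm_nonneg[OF k_pos, of w2] by (simp add: u_b_def)
    show ?thesis
      unfolding level_moves_iff add_move_shift_in_vertices_iff[OF u]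
    proof (intro conjI move_shift_in_graver_basis)
    qed (use T_ok t_pos in \<open>auto simp: move_shift_def\<close>)
  qed
  moreover have "inj_on (\<lambda>S. move_shift k S ?T) (Pow {..<k})"
    by (rule inj_onI) (simp add: move_shift_eq_iff subset_iff)
  ultimately show ?thesis
    using card_inj_on_le[OF _ _ finite_level_moves, of "\<lambda>S. move_shift k S ?T" "Pow {..<k}"]
    by (simp add: image_subset_iff card_Pow)
qed

lemma card_level_moves_down_ge:
  assumes u: "u \<in> vertices" and above: "l_b k w1 < u (4*k)"
  shows "2^k \<le> card (level_moves u (-1))"
proof -
  let ?S = "{i. i < k \<and> 0 < u i}"
  have uf: "\<forall>i<k. 0 \<le> u i \<and> u i + u (k+i) = w1 i + u (4*k)"
    using u[unfolded fiber_A_mat_iff] by auto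
  have "- move_shift k ?S T \<in> level_moves u (-1)" for T
  proof -
    have S_ok: "0 < u (k+i)" if "i < k" "i \<notin> ?S" for i
      using uf above neg_inf_norm_shift_nonneg[OF k_pos \<open>i < k\<close>, of w1] that
      by (force simp: l_b_def)
    have s_pos: "0 < u (4*k)"
      using above neg_inf_norm_nonneg[OF k_pos, of w1] by (simp add: l_b_def)
    show ?thesis
      unfolding level_moves_iff add_neg_move_shift_in_vertices_iff[OF u]
    proof (intro conjI graver_basis_uminus move_shift_in_graver_basis)
    qed (use S_ok s_pos in \<open>auto simp: move_shift_def\<close>)
  qed
  moreover have "inj_on (\<lambda>T. - move_shift k ?S T) (Pow {..<k})"
    by (rule inj_onI) (simp add: move_shift_eq_iff subset_iff)
  ultimately show ?thesis
    using card_inj_on_le[OF _ _ finite_level_moves, of "\<lambda>T. - move_shift k ?S T" "Pow {..<k}"]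
    by (simp add: image_subset_iff card_Pow)
qed

lemma level_moves_up_empty:
  assumes "u \<in> vertices" "u_b k w2 c \<le> u (4*k)"
  shows "level_moves u 1 = {}"
  using assms vertex_level_bounds(2) by (force simp: level_moves_iff)

lemma level_moves_down_empty:
  assumes "u \<in> vertices" "u (4*k) \<le> l_b k w1"
  shows "level_moves u (-1) = {}"
  using assms vertex_level_bounds(1) by (force simp: level_moves_iff)

lemma card_level_moves_zero_corner:
  assumes "l_b k w1 \<le> p" "p \<le> u_b k w2 c"
  shows "card (level_moves (corner_vertex p) 0) \<le> supp_card_shift k w1 p + supp_card_shift k w2 (c - p)"
proof -
  let ?I1 = "{i. i < k \<and> w1 i + p \<noteq> 0}" and ?I2 = "{i. i < k \<and> w2 i + (c - p) \<noteq> 0}"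
  note corner = corner_vertex_in_vertices[OF assms]
  have "level_moves (corner_vertex p) 0 \<subseteq> (\<lambda>i. - move_swap1 k i) ` ?I1 \<union> (\<lambda>i. - move_swap2 k i) ` ?I2"
  proof
    fix g assume "g \<in> level_moves (corner_vertex p) 0"
    then have g: "g \<in> graver" "corner_vertex p + g \<in> vertices" "g (4*k) = 0"
      by (simp_all add: level_moves_iff)
    obtain i where "i < k"
      "g = move_swap1 k i \<or> g = - move_swap1 k i \<or> g = move_swap2 k i \<or> g = - move_swap2 k i"
      using graver_basis_A_mat_zero_level[OF g(1,3)] .
    then show "g \<in> (\<lambda>i. - move_swap1 k i) ` ?I1 \<union> (\<lambda>i. - move_swap2 k i) ` ?I2"
      using g(2) add_move_swap1_in_vertices_iff[OF corner \<open>i < k\<close>]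
        add_neg_move_swap1_in_vertices_iff[OF corner \<open>i < k\<close>]
        add_move_swap2_in_vertices_iff[OF corner \<open>i < k\<close>]
        add_neg_move_swap2_in_vertices_iff[OF corner \<open>i < k\<close>]
      by (auto simp: corner_vertex_def)
  qed
  then have "card (level_moves (corner_vertex p) 0)
      \<le> card ((\<lambda>i. - move_swap1 k i) ` ?I1 \<union> (\<lambda>i. - move_swap2 k i) ` ?I2)"
    by (intro card_mono) auto
  also have "\<dots> \<le> card ?I1 + card ?I2"
    by (intro order_trans[OF card_Un_le] add_mono card_image_le) auto
  finally show ?thesis
    unfolding supp_card_shift_def .
qed

lemma card_level_moves_up_corner:
  assumes "l_b k w1 \<le> p" "p \<le> u_b k w2 c"
  shows "card (level_moves (corner_vertex p) 1) \<le> 2^k"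
proof -
  note corner = corner_vertex_in_vertices[OF assms]
  have "level_moves (corner_vertex p) 1 \<subseteq> (\<lambda>S. move_shift k S {..<k}) ` Pow {..<k}"
  proof
    fix g assume "g \<in> level_moves (corner_vertex p) 1"
    then have g: "g \<in> graver" "corner_vertex p + g \<in> vertices" "g (4*k) = 1"
      by (simp_all add: level_moves_iff)
    define S where "S = {i. i < k \<and> 0 < g i}"
    define T where "T = {i. i < k \<and> g (2*k+i) < 0}"
    have "g = move_shift k S T"
      unfolding S_def T_def using graver_basis_A_mat_pos_level[OF g(1)] g(3) by simp
    moreover have "T = {..<k}"
    proof -
      have "\<forall>i<k. if i \<in> T then 0 < corner_vertex p (2*k+i) else 0 < corner_vertex p (3*k+i)"
        using g(2) unfolding \<open>g = move_shift k S T\<close> add_move_shift_in_vertices_iff[OF corner] by blast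
      then have sel: "if i \<in> T then 0 < corner_vertex p (2*k+i) else 0 < corner_vertex p (3*k+i)" if "i < k" for i
        using that by blast
      have "i \<in> T" if "i < k" for i
        using sel[OF that] that by (cases "i \<in> T") (simp_all add: corner_vertex_def)
      then show ?thesis
        by (auto simp: T_def)
    qed
    ultimately show "g \<in> (\<lambda>S. move_shift k S {..<k}) ` Pow {..<k}"
      by (auto simp: S_def)
  qed
  then have "card (level_moves (corner_vertex p) 1) \<le> card ((\<lambda>S. move_shift k S {..<k}) ` Pow {..<k})"
    by (intro card_mono) auto
  also have "\<dots> \<le> 2^k"
    using card_image_le[of "Pow {..<k}" "\<lambda>S. move_shift k S {..<k}"] by (simp add: card_Pow)
  finally show ?thesis .
qed

lemma card_level_moves_down_corner:
  assumes "l_b k w1 \<le> p" "p \<le> u_b k w2 c"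
  shows "card (level_moves (corner_vertex p) (-1)) \<le> 2^k"
proof -
  note corner = corner_vertex_in_vertices[OF assms]
  have "level_moves (corner_vertex p) (-1) \<subseteq> (\<lambda>T. - move_shift k {..<k} T) ` Pow {..<k}"
  proof
    fix g assume "g \<in> level_moves (corner_vertex p) (-1)"
    then obtain h where g: "g = - h" and h: "h \<in> graver" "corner_vertex p + - h \<in> vertices" "h (4*k) = 1"
      using graver_basis_uminus by (force simp: level_moves_iff)
    define S where "S = {i. i < k \<and> 0 < h i}"
    define T where "T = {i. i < k \<and> h (2*k+i) < 0}"
    have "h = move_shift k S T"
      unfolding S_def T_def using graver_basis_A_mat_pos_level[OF h(1)] h(3) by simp
    moreover have "S = {..<k}"
    proof -
      have "\<forall>i<k. if i \<in> S then 0 < corner_vertex p i else 0 < corner_vertex p (k+i)"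
        using h(2) unfolding \<open>h = move_shift k S T\<close> add_neg_move_shift_in_vertices_iff[OF corner] by blast
      then have sel: "if i \<in> S then 0 < corner_vertex p (i) else 0 < corner_vertex p (k+i)" if "i < k" for i
        using that by blast
      have "i \<in> S" if "i < k" for i
        using sel[OF that] that by (cases "i \<in> S") (simp_all add: corner_vertex_def)
      then show ?thesis
        by (auto simp: S_def)
    qed
    ultimately show "g \<in> (\<lambda>T. - move_shift k {..<k} T) ` Pow {..<k}"
      using g by (auto simp: T_def)
  qed
  then have "card (level_moves (corner_vertex p) (-1))
      \<le> card ((\<lambda>T. - move_shift k {..<k} T) ` Pow {..<k})"
    by (intro card_mono) auto
  also have "\<dots> \<le> 2^k"
    using card_image_le[of "Pow {..<k}" "\<lambda>T. - move_shift k {..<k} T"] by (simp add: card_Pow)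
  finally show ?thesis .
qed

text \<open>The smallest degree of a vertex on level \<open>p\<close>; it is attained by \<open>corner_vertex p\<close>.\<close>
definition level_degree :: "int \<Rightarrow> nat" where
  "level_degree p = supp_card_shift k w1 p + supp_card_shift k w2 (c - p)
     + (if p < u_b k w2 c then 2^k else 0) + (if l_b k w1 < p then 2^k else 0)"

lemma level_degree_le_fiber_degree:
  assumes u: "u \<in> vertices"
  shows "level_degree (u (4*k)) \<le> fiber_degree (2*k+1) (4*k+2) (A_mat k) (b_vec k w1 w2 c) graver u"
proof -
  have "(if u (4*k) < u_b k w2 c then 2^k else 0) \<le> card (level_moves u 1)"
    "(if l_b k w1 < u (4*k) then 2^k else 0) \<le> card (level_moves u (-1))"
    using card_level_moves_up_ge[OF u] card_level_moves_down_ge[OF u] by simp_all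
  then show ?thesis
    unfolding fiber_degree_eq_card_level_moves level_degree_def
    using card_level_moves_zero_ge[OF u] by linarith
qed

lemma fiber_degree_corner_vertex:
  assumes "l_b k w1 \<le> p" "p \<le> u_b k w2 c"
  shows "fiber_degree (2*k+1) (4*k+2) (A_mat k) (b_vec k w1 w2 c) graver (corner_vertex p) = level_degree p"
proof (rule antisym)
  note corner = corner_vertex_in_vertices[OF assms]
  have level: "corner_vertex p (4*k) = p"
    by (simp add: corner_vertex_def)
  have "card (level_moves (corner_vertex p) 1) \<le> (if p < u_b k w2 c then 2^k else 0)"
    "card (level_moves (corner_vertex p) (-1)) \<le> (if l_b k w1 < p then 2^k else 0)"
    using card_level_moves_up_corner[OF assms] card_level_moves_down_corner[OF assms]
      level_moves_up_empty[OF corner] level_moves_down_empty[OF corner] level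
    by auto
  then show "fiber_degree (2*k+1) (4*k+2) (A_mat k) (b_vec k w1 w2 c) graver (corner_vertex p) \<le> level_degree p"
    unfolding fiber_degree_eq_card_level_moves level_degree_def
    using card_level_moves_zero_corner[OF assms] by linarith
  show "level_degree p \<le> fiber_degree (2*k+1) (4*k+2) (A_mat k) (b_vec k w1 w2 c) graver (corner_vertex p)"
    using level_degree_le_fiber_degree[OF corner] level by simp
qed

lemma min_degree_eq_Min_level_degree:
  assumes "l_b k w1 \<le> u_b k w2 c"
  shows "min_degree (2*k+1) (4*k+2) (A_mat k) (b_vec k w1 w2 c) graver
    = Min (level_degree ` {l_b k w1..u_b k w2 c})"
  unfolding min_degree_def
proof (rule Min_eqI)
  let ?deg = "fiber_degree (2*k+1) (4*k+2) (A_mat k) (b_vec k w1 w2 c) graver"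
  let ?levels = "{l_b k w1..u_b k w2 c}"
  show "finite (?deg ` vertices)"
    by (intro finite_imageI finite_vertices)
  have Min_le: "Min (level_degree ` ?levels) \<le> level_degree p" if "p \<in> ?levels" for p
    using that by (intro Min_le) auto
  show "Min (level_degree ` ?levels) \<le> y" if y: "y \<in> ?deg ` vertices" for y
  proof -
    obtain u where u: "u \<in> vertices" "y = ?deg u"
      using y by blast
    have "Min (level_degree ` ?levels) \<le> level_degree (u (4*k))"
      using Min_le vertex_level_bounds[OF u(1)] by simp
    also have "\<dots> \<le> y"
      using level_degree_le_fiber_degree[OF u(1)] u(2) by simp
    finally show ?thesis .
  qed
  have "Min (level_degree ` ?levels) \<in> level_degree ` ?levels"
    using assms by (intro Min_in) auto
  then obtain p where p: "l_b k w1 \<le> p" "p \<le> u_b k w2 c" "Min (level_degree ` ?levels) = level_degree p"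
    by auto
  then have "Min (level_degree ` ?levels) = ?deg (corner_vertex p)"
    using fiber_degree_corner_vertex by simp
  then show "Min (level_degree ` ?levels) \<in> ?deg ` vertices"
    using corner_vertex_in_vertices[OF p(1,2)] by blast
qed

lemma level_degree_degenerate:
  assumes "l_b k w1 = u_b k w2 c"
  shows "level_degree (l_b k w1)
    = supp_card_shift k w1 (neg_inf_norm k w1) + supp_card_shift k w2 (neg_inf_norm k w2)"
  using assms by (simp add: level_degree_def l_b_def u_b_def)

lemma level_degree_ends:
  assumes "l_b k w1 < u_b k w2 c"
  shows "level_degree (l_b k w1) = supp_card_shift k w1 (neg_inf_norm k w1) + k + 2^k"
    and "level_degree (u_b k w2 c) = k + supp_card_shift k w2 (neg_inf_norm k w2) + 2^k"
  using assms supp_card_shift_full[OF k_pos, of w1] supp_card_shift_full[OF k_pos, of w2]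
  by (simp_all add: level_degree_def l_b_def u_b_def)

lemma level_degree_interior:
  assumes "l_b k w1 < p" "p < u_b k w2 c"
  shows "level_degree p = k + k + 2^k + 2^k"
  using assms supp_card_shift_full[OF k_pos, of w1] supp_card_shift_full[OF k_pos, of w2]
  by (simp add: level_degree_def l_b_def u_b_def)

lemma Min_level_degree:
  assumes lt: "l_b k w1 < u_b k w2 c"
  shows "Min (level_degree ` {l_b k w1..u_b k w2 c})
    = min (supp_card_shift k w1 (neg_inf_norm k w1)) (supp_card_shift k w2 (neg_inf_norm k w2)) + k + 2^k"
    (is "_ = min ?s1 ?s2 + _ + _")
proof (rule Min_eqI)
  have min_le: "min ?s1 ?s2 \<le> k"
    using supp_card_shift_le[of k w1] by (simp add: min_le_iff_disj)
  fix d assume "d \<in> level_degree ` {l_b k w1..u_b k w2 c}"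
  then obtain p where p: "l_b k w1 \<le> p" "p \<le> u_b k w2 c" "d = level_degree p"
    by auto
  then consider "p = l_b k w1" | "p = u_b k w2 c" | "l_b k w1 < p" "p < u_b k w2 c"
    by linarith
  then show "min ?s1 ?s2 + k + 2^k \<le> d"
    using level_degree_ends[OF lt] level_degree_interior min_le p(3) by cases auto
next
  show "min ?s1 ?s2 + k + 2^k \<in> level_degree ` {l_b k w1..u_b k w2 c}"
  proof (cases "?s1 \<le> ?s2")
    case True
    then show ?thesis
      using level_degree_ends(1)[OF lt] lt by (intro image_eqI[where x = "l_b k w1"]) auto
  next
    case False
    then show ?thesis
      using level_degree_ends(2)[OF lt] lt by (intro image_eqI[where x = "u_b k w2 c"]) auto
  qed
qed simp

end

theorem proposition3:
  fixes k :: nat and w1 w2 :: "nat \<Rightarrow> int" and c :: int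
  assumes "k \<ge> 1"
  defines "\<delta> \<equiv> min_degree (2*k+1) (4*k+2) (A_mat k) (b_vec k w1 w2 c)
                   (graver_basis (2*k+1) (4*k+2) (A_mat k))"
  defines "s1 \<equiv> supp_card_shift k w1 (neg_inf_norm k w1)"
  defines "s2 \<equiv> supp_card_shift k w2 (neg_inf_norm k w2)"
  shows "(l_b k w1 = u_b k w2 c \<longrightarrow> \<delta> = s1 + s2)
       \<and> (l_b k w1 < u_b k w2 c \<longrightarrow> \<delta> = min s1 s2 + k + 2^k)"
proof (intro conjI impI)
  interpret A_mat_fiber k w1 w2 c
    using assms(1) by unfold_locales simp
  show "\<delta> = s1 + s2" if "l_b k w1 = u_b k w2 c"
    using that min_degree_eq_Min_level_degree level_degree_degenerate
    unfolding \<delta>_def s1_def s2_def by simp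
  show "\<delta> = min s1 s2 + k + 2^k" if "l_b k w1 < u_b k w2 c"
    using that min_degree_eq_Min_level_degree Min_level_degree
    unfolding \<delta>_def s1_def s2_def by simp
qed

end
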